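(* Let $F:\mathbb{R}^d\to\mathbb{R}^d$ be $L$-Lipschitz, $G:\mathbb{R}^d\rightrightarrows\mathbb{R}^d$ maximally monotone, the solution set of $0\in F(x)+G(x)$ nonempty, and $x^\star$ a solution satisfying $\langle u,x-x^\star\rangle\ge-\rho\|u\|^2$ for all $(x,u)$ in the graph of $F+G$, with $0<\rho<\eta$. Let $\alpha=1-\frac\rho\eta$ and suppose $(x_k)$ satisfies $x_{k+1}=(1-\alpha)x_k+\alpha\widetilde J_k$ where $\|J_{\eta(F+G)}(x_k)-\widetilde J_k\|\le\varepsilon_k$ for some $\varepsilon_k>0$. Then for $k\ge0$, $$\|x_{k+1}-x^\star\|\le\|x_k-x^\star\|+\Big(1-\frac\rho\eta\Big)\varepsilon_k.$$
   Context: For an operator $A$, $J_A=(\mathrm{Id}+A)^{-1}$ is its resolvent. *)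

theory Defs
  imports "HOL-Analysis.Analysis"
begin

type_synonym 'a setop = "'a \<Rightarrow> 'a set"

definition graph_op :: "'a setop \<Rightarrow> ('a \<times> 'a) set" where
  "graph_op A = {(x, u). u \<in> A x}"

definition monotone_op :: "('a::real_inner) setop \<Rightarrow> bool" where
  "monotone_op A \<longleftrightarrow>
     (\<forall>x u y v. u \<in> A x \<longrightarrow> v \<in> A y \<longrightarrow> inner (u - v) (x - y) \<ge> 0)"

definition maximal_monotone_op :: "('a::real_inner) setop \<Rightarrow> bool" where
  "maximal_monotone_op A \<longleftrightarrow> monotone_op A \<and>
     (\<forall>x u. (\<forall>y v. v \<in> A y \<longrightarrow> inner (u - v) (x - y) \<ge> 0) \<longrightarrow> u \<in> A x)"

definition op_plus :: "('a \<Rightarrow> 'a::real_vector) \<Rightarrow> 'a setop \<Rightarrow> 'a setop" where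
  "op_plus F G x = (\<lambda>g. F x + g) ` G x"

definition op_scale :: "real \<Rightarrow> ('a::real_vector) setop \<Rightarrow> 'a setop" where
  "op_scale c A x = (\<lambda>u. c *\<^sub>R u) ` A x"

text \<open>Resolvent J_A = (Id + A)^{-1} as a set-valued operator:
  y \<in> J_A x iff x \<in> y + A y.\<close>
definition resolvent :: "('a::real_vector) setop \<Rightarrow> 'a setop" where
  "resolvent A x = {y. x \<in> (\<lambda>u. y + u) ` A y}"

end

theory Submission
  imports Defs
begin

text \<open>If j is a resolvent point of x, then x = j + \<eta> u with u in (F + G) j, and the weak
  Minty condition at j gives <u, x - xstar> \<ge> (\<eta> - \<rho>) |u|^2. Hence the exact relaxed step
  x - (\<eta> - \<rho>) u = (1 - \<alpha>) x + \<alpha> j does not increase the distance to xstar, and replacing j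
  by its approximation costs at most \<alpha> \<epsilon> k.\<close>

lemma norm_diff_scaleR_le:
  fixes a u :: "'a::real_inner" and c :: real
  assumes "0 \<le> c" and "c * (norm u)\<^sup>2 \<le> inner u a"
  shows "norm (a - c *\<^sub>R u) \<le> norm a"
proof -
  have "(norm (a - c *\<^sub>R u))\<^sup>2 = (norm a)\<^sup>2 - 2 * c * inner u a + c\<^sup>2 * (norm u)\<^sup>2"
    unfolding power2_norm_eq_inner
    by (simp add: inner_diff_left inner_diff_right inner_commute power2_eq_square algebra_simps)
  also have "\<dots> \<le> (norm a)\<^sup>2"
  proof -
    have "c * (c * (norm u)\<^sup>2) \<le> c * inner u a"
      using mult_left_mono[OF assms(2) assms(1)] .
    moreover have "0 \<le> c * (c * (norm u)\<^sup>2)"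
      using assms(1) by simp
    ultimately show ?thesis
      by (simp add: power2_eq_square)
  qed
  finally show ?thesis
    using power2_le_imp_le by fastforce
qed

lemma mem_resolvent_op_scale_iff:
  "j \<in> resolvent (op_scale c A) x \<longleftrightarrow> (\<exists>u \<in> A j. x = j + c *\<^sub>R u)"
  by (auto simp: resolvent_def op_scale_def)

lemma relaxed_resolvent_step_norm_le:
  fixes x j u xstar :: "'a::real_inner" and \<rho> \<eta> :: real
  assumes x_eq: "x = j + \<eta> *\<^sub>R u"
    and minty: "- \<rho> * (norm u)\<^sup>2 \<le> inner u (j - xstar)"
    and "0 < \<eta>" and "\<rho> \<le> \<eta>"
  shows "norm ((\<rho> / \<eta>) *\<^sub>R x + (1 - \<rho> / \<eta>) *\<^sub>R j - xstar) \<le> norm (x - xstar)"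
proof -
  have "inner u (x - xstar) = inner u (j - xstar) + \<eta> * (norm u)\<^sup>2"
    unfolding x_eq by (simp add: inner_add_right power2_norm_eq_inner algebra_simps)
  then have descent: "(\<eta> - \<rho>) * (norm u)\<^sup>2 \<le> inner u (x - xstar)"
    using minty by (simp add: algebra_simps)
  have "(\<rho> / \<eta>) *\<^sub>R x + (1 - \<rho> / \<eta>) *\<^sub>R j - xstar = (x - xstar) - (\<eta> - \<rho>) *\<^sub>R u"
    using \<open>0 < \<eta>\<close> unfolding x_eq by (simp add: algebra_simps)
  also have "norm \<dots> \<le> norm (x - xstar)"
    by (rule norm_diff_scaleR_le) (use descent \<open>\<rho> \<le> \<eta>\<close> in auto)
  finally show ?thesis .
qed

theorem lemmaB6:
  fixes F :: "'a::euclidean_space \<Rightarrow> 'a" and G :: "'a setop"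
    and L \<rho> \<eta> :: real and xstar :: 'a
    and x Jt :: "nat \<Rightarrow> 'a" and \<epsilon> :: "nat \<Rightarrow> real"
  assumes F_lip: "L-lipschitz_on UNIV F"
    and G_mm: "maximal_monotone_op G"
    and sol_nonempty: "{z. 0 \<in> op_plus F G z} \<noteq> {}"
    and xstar_sol: "0 \<in> op_plus F G xstar"
    and weak_mvi: "\<forall>(z, u) \<in> graph_op (op_plus F G). inner u (z - xstar) \<ge> - \<rho> * (norm u)\<^sup>2"
    and rho_pos: "0 < \<rho>" and rho_eta: "\<rho> < \<eta>"
    and eps_pos: "\<forall>k. \<epsilon> k > 0"
    and approx: "\<forall>k. \<exists>j \<in> resolvent (op_scale \<eta> (op_plus F G)) (x k). norm (j - Jt k) \<le> \<epsilon> k"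
    and iter: "\<forall>k. x (Suc k) = (1 - (1 - \<rho> / \<eta>)) *\<^sub>R x k + (1 - \<rho> / \<eta>) *\<^sub>R Jt k"
  shows "\<forall>k. norm (x (Suc k) - xstar) \<le> norm (x k - xstar) + (1 - \<rho> / \<eta>) * \<epsilon> k"
proof
  fix k
  define \<alpha> where "\<alpha> = 1 - \<rho> / \<eta>"
  have "0 < \<eta>" using rho_pos rho_eta by linarith
  then have "0 \<le> \<alpha>" using rho_eta by (simp add: \<alpha>_def)
  obtain j where "j \<in> resolvent (op_scale \<eta> (op_plus F G)) (x k)" and j_close: "norm (j - Jt k) \<le> \<epsilon> k"
    using approx by blast
  then obtain u where "u \<in> op_plus F G j" and x_eq: "x k = j + \<eta> *\<^sub>R u"
    by (auto simp: mem_resolvent_op_scale_iff)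
  then have "- \<rho> * (norm u)\<^sup>2 \<le> inner u (j - xstar)"
    using weak_mvi by (auto simp: graph_op_def)
  then have exact_step: "norm ((1 - \<alpha>) *\<^sub>R x k + \<alpha> *\<^sub>R j - xstar) \<le> norm (x k - xstar)"
    using relaxed_resolvent_step_norm_le[OF x_eq] \<open>0 < \<eta>\<close> rho_eta by (simp add: \<alpha>_def)
  have "x (Suc k) - xstar = ((1 - \<alpha>) *\<^sub>R x k + \<alpha> *\<^sub>R j - xstar) + \<alpha> *\<^sub>R (Jt k - j)"
    using iter by (simp add: \<alpha>_def algebra_simps)
  also have "norm \<dots> \<le> norm ((1 - \<alpha>) *\<^sub>R x k + \<alpha> *\<^sub>R j - xstar) + \<alpha> * norm (Jt k - j)"
    using norm_triangle_ineq[of _ "\<alpha> *\<^sub>R (Jt k - j)"] \<open>0 \<le> \<alpha>\<close> by simp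
  also have "\<dots> \<le> norm (x k - xstar) + \<alpha> * \<epsilon> k"
    using exact_step mult_left_mono[OF j_close \<open>0 \<le> \<alpha>\<close>] by (simp add: norm_minus_commute)
  finally show "norm (x (Suc k) - xstar) \<le> norm (x k - xstar) + (1 - \<rho> / \<eta>) * \<epsilon> k"
    by (simp only: \<alpha>_def)
qed

end
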